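(* Let $f,g\in\mathcal{S}_d$ and $\beta>0$, and suppose $\hat{\mathbb{D}}_{\beta,d}(f,g)<\infty$. Then $\hat{\mathbb{D}}_{\beta,\infty}(f,g)<\infty$.
   Context: $\mathcal{S}_d$ is the set of multiplicative functions $f=f_1*\cdots*f_d$ where each $f_i$ is completely multiplicative with $|f_i(n)|\le1$, and $(a*b)(n)=\sum_{dm=n}a(d)b(m)$. For $k\in\{1,2,\dots\}\cup\{\infty\}$, $\hat{\mathbb{D}}_{\beta,k}(f,g):=\sum_p\sum_{j=1}^k\frac{|f(p^j)-g(p^j)|}{p^{j\beta}}$ (sum over primes). *)

theory Defs
  imports "HOL-Analysis.Analysis" "HOL-Library.Extended_Nat" "HOL-Library.Extended_Nonnegative_Real"
begin

text \<open>Arithmetic functions are maps nat => complex; only values at n >= 1 matter.\<close>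

definition dconv :: "(nat \<Rightarrow> complex) \<Rightarrow> (nat \<Rightarrow> complex) \<Rightarrow> nat \<Rightarrow> complex" where
  "dconv a b n = (\<Sum>d | d dvd n. a d * b (n div d))"

definition dunit :: "nat \<Rightarrow> complex" where
  "dunit n = (if n = 1 then 1 else 0)"

definition compl_mult :: "(nat \<Rightarrow> complex) \<Rightarrow> bool" where
  "compl_mult f \<longleftrightarrow> f 1 = 1 \<and> (\<forall>m n. m > 0 \<longrightarrow> n > 0 \<longrightarrow> f (m * n) = f m * f n)"

definition S_class :: "nat \<Rightarrow> (nat \<Rightarrow> complex) \<Rightarrow> bool" where
  "S_class d f \<longleftrightarrow> (\<exists>fs. length fs = d \<and>
      (\<forall>h\<in>set fs. compl_mult h \<and> (\<forall>n>0. norm (h n) \<le> 1)) \<and>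
      (\<forall>n>0. f n = foldr dconv fs dunit n))"

definition Dhat :: "real \<Rightarrow> enat \<Rightarrow> (nat \<Rightarrow> complex) \<Rightarrow> (nat \<Rightarrow> complex) \<Rightarrow> ennreal" where
  "Dhat \<beta> k f g = infsum (\<lambda>(p, j). ennreal (norm (f (p ^ j) - g (p ^ j)) / real p powr (real j * \<beta>)))
      {(p, j). prime p \<and> 1 \<le> j \<and> enat j \<le> k}"

end

theory Submission
  imports Defs "HOL-Computational_Algebra.Formal_Power_Series" "HOL-Computational_Algebra.Primes"
begin

(* At a prime p, the values f(p^j) of f = f_1 * ... * f_d are the Taylor coefficients of the Euler
   factor prod_i (1 - f_i(p) X)^-1, whose inverse is a polynomial of degree d with coefficients
   bounded by 2^d. That polynomial is determined by the first d coefficients, and beyond degree d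
   the coefficients obey a linear recurrence of order d with it; comparing f and g therefore gives
   |f(p^j) - g(p^j)| <= W R^j sum_{k<=d} |f(p^k) - g(p^k)| with W, R depending only on d.
   For the primes with p^beta >= 2R the terms with j > d are thus dominated by a geometric series
   times the terms with j <= d, whose sum is finite by hypothesis. The finitely many remaining
   primes contribute convergent series, since the coefficients grow only polynomially in j. *)

unbundle no vec_syntax
unbundle fps_syntax

lemma compl_mult_power:
  assumes "compl_mult h" "p > 0"
  shows "h (p ^ i) = h p ^ i"
  by (induction i) (use assms in \<open>simp_all add: compl_mult_def\<close>)

lemma dconv_prime_power:
  assumes "compl_mult h" "prime (p::nat)"
  shows "dconv h F (p ^ j) = (\<Sum>i=0..j. h p ^ i * F (p ^ (j - i)))"
proof -
  have p1: "p > 1" using assms(2) prime_gt_1_nat by blast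
  have divisors: "{d. d dvd p ^ j} = (\<lambda>i. p ^ i) ` {0..j}"
    using divides_primepow_nat[OF assms(2)] by auto
  have inj: "inj_on (\<lambda>i. p ^ i) {0..j}"
    using p1 by (auto simp: inj_on_def)
  have "dconv h F (p ^ j) = (\<Sum>i=0..j. h (p ^ i) * F (p ^ j div p ^ i))"
    unfolding dconv_def divisors by (simp add: sum.reindex[OF inj])
  also have "\<dots> = (\<Sum>i=0..j. h p ^ i * F (p ^ (j - i)))"
    using p1 by (intro sum.cong) (simp_all add: compl_mult_power[OF assms(1)] power_diff)
  finally show ?thesis .
qed

definition euler_fps :: "'a::comm_ring_1 list \<Rightarrow> 'a fps" where
  "euler_fps as = (\<Prod>a\<leftarrow>as. Abs_fps (\<lambda>n. a ^ n))"

definition euler_denom :: "'a::comm_ring_1 list \<Rightarrow> 'a fps" where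
  "euler_denom as = (\<Prod>a\<leftarrow>as. 1 - fps_const a * fps_X)"

lemma foldr_dconv_prime_power:
  assumes "\<forall>h\<in>set hs. compl_mult h" "prime p"
  shows "foldr dconv hs dunit (p ^ j) = euler_fps (map (\<lambda>h. h p) hs) $ j"
  using assms(1)
proof (induction hs arbitrary: j)
  case Nil
  have "p ^ j = 1 \<longleftrightarrow> j = 0" using prime_gt_1_nat[OF assms(2)] by simp
  then show ?case by (simp add: dunit_def euler_fps_def)
next
  case (Cons h hs)
  then show ?case
    by (simp add: dconv_prime_power[OF _ assms(2)] fps_mult_nth euler_fps_def)
qed

lemma S_class_prime_power:
  assumes "S_class d f" "prime p"
  obtains as where "length as = d" "\<forall>a\<in>set as. norm a \<le> 1" "\<And>j. f (p ^ j) = euler_fps as $ j"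
proof -
  obtain hs where hs: "length hs = d" "\<forall>h\<in>set hs. compl_mult h \<and> (\<forall>n>0. norm (h n) \<le> 1)"
      "\<forall>n>0. f n = foldr dconv hs dunit n"
    using assms(1) unfolding S_class_def by blast
  have "p > 0" using assms(2) prime_gt_0_nat by blast
  then show ?thesis
    using that[of "map (\<lambda>h. h p) hs"] hs foldr_dconv_prime_power[OF _ assms(2)] by auto
qed

lemma one_minus_const_X_mult_nth:
  fixes F :: "'a::comm_ring_1 fps"
  shows "((1 - fps_const a * fps_X) * F) $ k = F $ k - (if k = 0 then 0 else a * F $ (k - 1))"
proof -
  have "(1 - fps_const a * fps_X) * F = F - fps_const a * (fps_X * F)" by (simp add: algebra_simps)
  then show ?thesis by simp
qed

lemma euler_denom_mult_euler_fps: "euler_denom as * euler_fps as = 1"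
proof (induction as)
  case Nil then show ?case by (simp add: euler_denom_def euler_fps_def)
next
  case (Cons a as)
  have geometric: "(1 - fps_const a * fps_X) * Abs_fps (\<lambda>n. a ^ n) = 1"
  proof (rule fps_ext)
    fix n
    show "((1 - fps_const a * fps_X) * Abs_fps (\<lambda>n. a ^ n)) $ n = (1 :: 'a fps) $ n"
      by (cases n) (simp_all add: algebra_simps)
  qed
  have "euler_denom (a # as) * euler_fps (a # as)
      = ((1 - fps_const a * fps_X) * Abs_fps (\<lambda>n. a ^ n)) * (euler_denom as * euler_fps as)"
    by (simp add: euler_denom_def euler_fps_def algebra_simps)
  then show ?case using Cons geometric by simp
qed

lemma euler_denom_nth_0: "euler_denom as $ 0 = 1"
  by (induction as) (simp_all add: euler_denom_def one_minus_const_X_mult_nth)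

lemma euler_denom_nth_eq_0: "length as < k \<Longrightarrow> euler_denom as $ k = 0"
  by (induction as arbitrary: k) (simp_all add: euler_denom_def one_minus_const_X_mult_nth)

lemma norm_euler_denom_nth_le:
  fixes as :: "'a::real_normed_field list"
  assumes "\<forall>a\<in>set as. norm a \<le> 1"
  shows "norm (euler_denom as $ k) \<le> 2 ^ length as"
  using assms
proof (induction as arbitrary: k)
  case Nil then show ?case by (simp add: euler_denom_def)
next
  case (Cons a as)
  have IH: "norm (euler_denom as $ i) \<le> 2 ^ length as" for i using Cons by simp
  have shifted: "norm (if k = 0 then 0 else a * euler_denom as $ (k - 1)) \<le> 2 ^ length as"
  proof (cases "k = 0")
    case False
    have "norm (a * euler_denom as $ (k - 1)) \<le> 1 * 2 ^ length as"
      unfolding norm_mult using Cons.prems IH by (intro mult_mono) auto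
    then show ?thesis using False by simp
  qed simp
  have "euler_denom (a # as) $ k
      = euler_denom as $ k - (if k = 0 then 0 else a * euler_denom as $ (k - 1))"
    by (simp add: euler_denom_def one_minus_const_X_mult_nth)
  then have "norm (euler_denom (a # as) $ k)
      \<le> norm (euler_denom as $ k) + norm (if k = 0 then 0 else a * euler_denom as $ (k - 1))"
    by (simp only: norm_triangle_ineq4)
  also have "\<dots> \<le> 2 ^ length as + 2 ^ length as" using IH shifted by (rule add_mono)
  finally show ?case by simp
qed

(* The j-th coefficient of (1 - X)^-d, which dominates the coefficients of the Euler factor. *)
fun num_weak_compositions :: "nat \<Rightarrow> nat \<Rightarrow> real" where
  "num_weak_compositions 0 j = (if j = 0 then 1 else 0)"
| "num_weak_compositions (Suc d) j = (\<Sum>i\<le>j. num_weak_compositions d (j - i))"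

lemma num_weak_compositions_nonneg: "num_weak_compositions d j \<ge> 0"
  by (induction d arbitrary: j) (auto intro: sum_nonneg)

lemma num_weak_compositions_le: "num_weak_compositions d j \<le> (real j + 1) ^ d"
proof (induction d arbitrary: j)
  case 0 then show ?case by simp
next
  case (Suc d)
  have "num_weak_compositions (Suc d) j \<le> (\<Sum>i\<le>j. (real j + 1) ^ d)"
    unfolding num_weak_compositions.simps
  proof (rule sum_mono)
    fix i assume "i \<in> {..j}"
    have "num_weak_compositions d (j - i) \<le> (real (j - i) + 1) ^ d" by (rule Suc)
    also have "\<dots> \<le> (real j + 1) ^ d" by (rule power_mono) auto
    finally show "num_weak_compositions d (j - i) \<le> (real j + 1) ^ d" .
  qed
  also have "\<dots> = (real j + 1) ^ Suc d" by simp
  finally show ?case .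
qed

lemma summable_num_weak_compositions:
  fixes x :: real
  assumes "0 \<le> x" "x < 1"
  shows "summable (\<lambda>j. num_weak_compositions d j * x ^ j)"
proof (induction d)
  case 0
  have "(\<lambda>j. num_weak_compositions 0 j * x ^ j) = (\<lambda>j. if j = 0 then 1 else 0)" by auto
  then show ?case by simp
next
  case (Suc d)
  have geometric: "summable (\<lambda>k. norm (x ^ k))" using assms by simp
  have IH: "summable (\<lambda>k. norm (num_weak_compositions d k * x ^ k))"
    using Suc assms by (simp add: num_weak_compositions_nonneg)
  have "(\<lambda>k. \<Sum>i\<le>k. x ^ i * (num_weak_compositions d (k - i) * x ^ (k - i)))
      = (\<lambda>j. num_weak_compositions (Suc d) j * x ^ j)"
  proof
    fix k
    have "(\<Sum>i\<le>k. x ^ i * (num_weak_compositions d (k - i) * x ^ (k - i)))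
        = (\<Sum>i\<le>k. num_weak_compositions d (k - i) * x ^ k)"
      by (rule sum.cong) (auto simp: power_add[symmetric])
    then show "(\<Sum>i\<le>k. x ^ i * (num_weak_compositions d (k - i) * x ^ (k - i)))
        = num_weak_compositions (Suc d) k * x ^ k"
      by (simp add: sum_distrib_right)
  qed
  then show ?case using summable_Cauchy_product[OF geometric IH] by simp
qed

lemma norm_euler_fps_nth_le:
  fixes as :: "'a::real_normed_field list"
  assumes "\<forall>a\<in>set as. norm a \<le> 1"
  shows "norm (euler_fps as $ j) \<le> num_weak_compositions (length as) j"
  using assms
proof (induction as arbitrary: j)
  case Nil then show ?case by (simp add: euler_fps_def)
next
  case (Cons a as)
  have "norm (euler_fps (a # as) $ j) = norm (\<Sum>i\<le>j. a ^ i * euler_fps as $ (j - i))"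
    by (simp add: euler_fps_def fps_mult_nth atLeast0AtMost)
  also have "\<dots> \<le> (\<Sum>i\<le>j. norm (a ^ i * euler_fps as $ (j - i)))" by (rule norm_sum)
  also have "\<dots> \<le> (\<Sum>i\<le>j. num_weak_compositions (length as) (j - i))"
  proof (rule sum_mono)
    fix i
    have "norm (a ^ i) \<le> 1" using Cons.prems by (simp add: norm_power power_le_one)
    moreover have "norm (euler_fps as $ (j - i)) \<le> num_weak_compositions (length as) (j - i)"
      using Cons by simp
    ultimately show "norm (a ^ i * euler_fps as $ (j - i)) \<le> num_weak_compositions (length as) (j - i)"
      unfolding norm_mult using mult_mono[of "norm (a ^ i)" 1] by fastforce
  qed
  finally show ?case by simp
qed

lemma norm_euler_fps_nth_le_power:
  fixes as :: "'a::real_normed_field list"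
  assumes "\<forall>a\<in>set as. norm a \<le> 1"
  shows "norm (euler_fps as $ j) \<le> (2 ^ length as) ^ j"
proof -
  have "real j + 1 \<le> 2 ^ j" by (induction j) auto
  then have "(real j + 1) ^ length as \<le> (2 ^ j) ^ length as" by (rule power_mono) simp
  then show ?thesis
    using norm_euler_fps_nth_le[OF assms, of j] num_weak_compositions_le[of "length as" j]
    by (simp add: power_mult[symmetric] mult.commute)
qed

lemma fps_mult_eq_1_nth:
  fixes A C :: "'a::comm_ring_1 fps"
  assumes "C * A = 1" "C $ 0 = 1" "j \<ge> 1"
  shows "A $ j = - (\<Sum>k=1..j. C $ k * A $ (j - k))"
proof -
  have "0 = (C * A) $ j" using assms(1,3) by simp
  also have "\<dots> = C $ 0 * A $ j + (\<Sum>k=1..j. C $ k * A $ (j - k))"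
    unfolding fps_mult_nth by (simp add: sum.atLeast_Suc_atMost)
  finally show ?thesis using assms(2) by (simp add: eq_neg_iff_add_eq_0)
qed

lemma fps_mult_eq_1_nth_bounded_degree:
  fixes A C :: "'a::comm_ring_1 fps"
  assumes "C * A = 1" "C $ 0 = 1" "\<And>k. d < k \<Longrightarrow> C $ k = 0" "d < j"
  shows "A $ j = - (\<Sum>k=1..d. C $ k * A $ (j - k))"
proof -
  have "(\<Sum>k=1..j. C $ k * A $ (j - k)) = (\<Sum>k=1..d. C $ k * A $ (j - k))"
    using assms(3,4) by (intro sum.mono_neutral_right) auto
  then show ?thesis using fps_mult_eq_1_nth[OF assms(1,2)] assms(4) by simp
qed

lemma inverse_denominator_nth_diff_le:
  fixes A B C C' :: "'a::real_normed_field fps" and K :: real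
  assumes inverse: "C * A = 1" "C' * B = 1" and coeff_0: "C $ 0 = 1" "C' $ 0 = 1"
    and degree: "\<And>k. d < k \<Longrightarrow> C $ k = 0" "\<And>k. d < k \<Longrightarrow> C' $ k = 0"
    and bounds: "K \<ge> 1" "\<And>k. norm (C' $ k) \<le> K" "\<And>k. norm (A $ k) \<le> K ^ k"
  shows "norm (C $ k - C' $ k) \<le> ((real d + 1) * K ^ d) ^ d * (\<Sum>i=1..d. norm (A $ i - B $ i))"
proof -
  define M where "M = (\<Sum>i=1..d. norm (A $ i - B $ i))"
  define V where "V = (real d + 1) * K ^ d"
  have M: "M \<ge> 0" unfolding M_def by (simp add: sum_nonneg)
  have Kd: "K ^ d \<ge> 1" using bounds(1) by (simp add: one_le_power)
  have V: "V \<ge> 1" unfolding V_def using mult_mono[OF _ Kd, of 1 "real d + 1"] by simp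
  have A0: "A $ 0 = 1" using arg_cong[OF inverse(1), of "\<lambda>F. F $ 0"] coeff_0(1) by simp
  have B0: "B $ 0 = 1" using arg_cong[OF inverse(2), of "\<lambda>F. F $ 0"] coeff_0(2) by simp
  have initial: "norm (C $ j - C' $ j) \<le> V ^ j * M" if "j \<le> d" for j
    using that
  proof (induction j rule: less_induct)
    case (less j)
    show ?case
    proof (cases "j = 0")
      case True then show ?thesis using coeff_0 M by simp
    next
      case False
      then have j: "1 \<le> j" by simp
      have summand_le: "norm (A $ k * (C $ (j - k) - C' $ (j - k)) + (A $ k - B $ k) * C' $ (j - k))
          \<le> K ^ d * (V ^ (j - 1) * M) + norm (A $ k - B $ k) * K" if k: "k \<in> {1..j}" for k
      proof -
        have A: "norm (A $ k) \<le> K ^ d"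
          using bounds(3)[of k] power_increasing[of k d K] k less.prems bounds(1) by auto
        have "norm (C $ (j - k) - C' $ (j - k)) \<le> V ^ (j - k) * M"
          using less.IH[of "j - k"] k less.prems by auto
        also have "\<dots> \<le> V ^ (j - 1) * M"
          using k V M by (intro mult_right_mono power_increasing) auto
        finally have C: "norm (C $ (j - k) - C' $ (j - k)) \<le> V ^ (j - 1) * M" .
        have "norm (A $ k * (C $ (j - k) - C' $ (j - k)) + (A $ k - B $ k) * C' $ (j - k))
            \<le> norm (A $ k) * norm (C $ (j - k) - C' $ (j - k)) + norm (A $ k - B $ k) * norm (C' $ (j - k))"
          by (metis norm_mult norm_triangle_ineq)
        also have "\<dots> \<le> K ^ d * (V ^ (j - 1) * M) + norm (A $ k - B $ k) * K"
          using A C bounds(2)[of "j - k"] Kd by (intro add_mono mult_mono) auto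
        finally show ?thesis .
      qed
      have C_rec: "C $ j = - (\<Sum>k=1..j. A $ k * C $ (j - k))"
        using fps_mult_eq_1_nth[of A C j] inverse(1) A0 j by (simp add: mult.commute)
      have C'_rec: "C' $ j = - (\<Sum>k=1..j. B $ k * C' $ (j - k))"
        using fps_mult_eq_1_nth[of B C' j] inverse(2) B0 j by (simp add: mult.commute)
      have "C $ j - C' $ j
          = - (\<Sum>k=1..j. A $ k * (C $ (j - k) - C' $ (j - k)) + (A $ k - B $ k) * C' $ (j - k))"
        unfolding C_rec C'_rec by (simp add: sum_subtractf sum.distrib algebra_simps)
      then have "norm (C $ j - C' $ j)
          \<le> (\<Sum>k=1..j. norm (A $ k * (C $ (j - k) - C' $ (j - k)) + (A $ k - B $ k) * C' $ (j - k)))"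
        by (simp only: norm_minus_cancel norm_sum)
      also have "\<dots> \<le> (\<Sum>k=1..j. K ^ d * (V ^ (j - 1) * M) + norm (A $ k - B $ k) * K)"
        by (rule sum_mono) (rule summand_le)
      also have "\<dots> = real j * (K ^ d * (V ^ (j - 1) * M)) + (\<Sum>k=1..j. norm (A $ k - B $ k)) * K"
        by (simp add: sum.distrib sum_distrib_right)
      also have "\<dots> \<le> real d * (K ^ d * (V ^ (j - 1) * M)) + M * (K ^ d * V ^ (j - 1))"
      proof (intro add_mono mult_mono)
        show "(\<Sum>k=1..j. norm (A $ k - B $ k)) \<le> M"
          unfolding M_def using less.prems by (intro sum_mono2) auto
        show "K \<le> K ^ d * V ^ (j - 1)"
          using power_increasing[of 1 d K] bounds(1) j less.prems one_le_power[OF V, of "j - 1"]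
            mult_mono[of K "K ^ d" 1 "V ^ (j - 1)"] by simp
      qed (use less.prems M V Kd bounds(1) in auto)
      also have "\<dots> = V ^ j * M"
        using j by (simp add: V_def algebra_simps power_eq_if)
      finally show ?thesis .
    qed
  qed
  have "norm (C $ k - C' $ k) \<le> V ^ d * M"
  proof (cases "k \<le> d")
    case True
    then have "norm (C $ k - C' $ k) \<le> V ^ k * M" by (rule initial)
    also have "\<dots> \<le> V ^ d * M" using True V M by (intro mult_right_mono power_increasing) auto
    finally show ?thesis .
  next
    case False then show ?thesis using degree V M by simp
  qed
  then show ?thesis unfolding V_def M_def .
qed

lemma inverse_nth_diff_le:
  fixes A B C C' :: "'a::real_normed_field fps" and K :: real
  assumes inverse: "C * A = 1" "C' * B = 1" and coeff_0: "C $ 0 = 1" "C' $ 0 = 1"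
    and degree: "\<And>k. d < k \<Longrightarrow> C $ k = 0" "\<And>k. d < k \<Longrightarrow> C' $ k = 0"
    and bounds: "K \<ge> 1" "\<And>k. norm (C $ k) \<le> K" "\<And>k. norm (C' $ k) \<le> K"
      "\<And>k. norm (A $ k) \<le> K ^ k" "\<And>k. norm (B $ k) \<le> K ^ k"
  shows "norm (A $ j - B $ j) \<le> (2 * real d * ((real d + 1) * K ^ d) ^ d + 1)
    * ((2 * real d + 1) * K) ^ j * (\<Sum>i=1..d. norm (A $ i - B $ i))"
proof -
  define M where "M = (\<Sum>i=1..d. norm (A $ i - B $ i))"
  define L where "L = ((real d + 1) * K ^ d) ^ d"
  define W where "W = 2 * real d * L + 1"
  define R where "R = (2 * real d + 1) * K"
  have M: "M \<ge> 0" unfolding M_def by (simp add: sum_nonneg)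
  have L: "L \<ge> 0" unfolding L_def using bounds(1) by simp
  have W: "W \<ge> 1" unfolding W_def using L by simp
  have R: "R \<ge> K" unfolding R_def using bounds(1) by simp
  have C_diff: "norm (C $ k - C' $ k) \<le> L * M" for k
    unfolding L_def M_def
    by (rule inverse_denominator_nth_diff_le[OF inverse coeff_0 degree bounds(1,3,4)])
  have A0: "A $ 0 = 1" using arg_cong[OF inverse(1), of "\<lambda>F. F $ 0"] coeff_0(1) by simp
  have B0: "B $ 0 = 1" using arg_cong[OF inverse(2), of "\<lambda>F. F $ 0"] coeff_0(2) by simp
  have "norm (A $ j - B $ j) \<le> W * R ^ j * M"
  proof (induction j rule: less_induct)
    case (less j)
    consider "j = 0" | "1 \<le> j" "j \<le> d" | "d < j" by linarith
    then show ?case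
    proof cases
      case 1 then show ?thesis using A0 B0 W R M bounds(1) by simp
    next
      case 2
      have "1 \<le> W * R ^ j" using W R bounds(1) one_le_power[of R j] mult_mono[of 1 W 1 "R ^ j"] by simp
      then have "M \<le> W * R ^ j * M" using M mult_right_mono[of 1 "W * R ^ j" M] by simp
      moreover have "norm (A $ j - B $ j) \<le> M" unfolding M_def using 2 by (intro member_le_sum) auto
      ultimately show ?thesis by linarith
    next
      case 3
      then obtain m where m: "j = Suc m" by (cases j) auto
      have summand_le: "norm (C $ k * (A $ (j - k) - B $ (j - k)) + (C $ k - C' $ k) * B $ (j - k))
          \<le> K * (W * R ^ m * M) + L * M * R ^ j" if k: "k \<in> {1..d}" for k
      proof -
        have "norm (A $ (j - k) - B $ (j - k)) \<le> W * R ^ (j - k) * M"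
          using less.IH[of "j - k"] k 3 by auto
        also have "\<dots> \<le> W * R ^ m * M"
          using k m W R M bounds(1) by (intro mult_right_mono mult_left_mono power_increasing) auto
        finally have A: "norm (A $ (j - k) - B $ (j - k)) \<le> W * R ^ m * M" .
        have "norm (B $ (j - k)) \<le> K ^ (j - k)" by (rule bounds(5))
        also have "\<dots> \<le> R ^ j"
          using R bounds(1) power_increasing[of "j - k" j R] power_mono[of K R "j - k"] by simp
        finally have B: "norm (B $ (j - k)) \<le> R ^ j" .
        have "norm (C $ k * (A $ (j - k) - B $ (j - k)) + (C $ k - C' $ k) * B $ (j - k))
            \<le> norm (C $ k) * norm (A $ (j - k) - B $ (j - k)) + norm (C $ k - C' $ k) * norm (B $ (j - k))"
          by (metis norm_mult norm_triangle_ineq)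
        also have "\<dots> \<le> K * (W * R ^ m * M) + L * M * R ^ j"
          using A B bounds(1,2) C_diff[of k] L M by (intro add_mono mult_mono) auto
        finally show ?thesis .
      qed
      have "A $ j - B $ j = - (\<Sum>k=1..d. C $ k * A $ (j - k)) + (\<Sum>k=1..d. C' $ k * B $ (j - k))"
        using fps_mult_eq_1_nth_bounded_degree[OF inverse(1) coeff_0(1) degree(1) 3]
          fps_mult_eq_1_nth_bounded_degree[OF inverse(2) coeff_0(2) degree(2) 3] by simp
      also have "\<dots>
          = - (\<Sum>k=1..d. C $ k * (A $ (j - k) - B $ (j - k)) + (C $ k - C' $ k) * B $ (j - k))"
        by (simp add: sum_subtractf sum.distrib algebra_simps)
      finally have "norm (A $ j - B $ j)
          \<le> (\<Sum>k=1..d. norm (C $ k * (A $ (j - k) - B $ (j - k)) + (C $ k - C' $ k) * B $ (j - k)))"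
        by (simp only: norm_minus_cancel norm_sum)
      also have "\<dots> \<le> (\<Sum>k=1..d. K * (W * R ^ m * M) + L * M * R ^ j)"
        by (rule sum_mono) (rule summand_le)
      also have "\<dots> = (real d * K) * (W * R ^ m * M) + (real d * L) * (M * R ^ j)"
        by (simp add: algebra_simps)
      also have "\<dots> \<le> (R / 2) * (W * R ^ m * M) + (W / 2) * (M * R ^ j)"
        using W R M L bounds(1) unfolding R_def W_def
        by (intro add_mono mult_right_mono) (auto simp: algebra_simps)
      also have "\<dots> = W * R ^ j * M" using m by (simp add: algebra_simps)
      finally show ?thesis .
    qed
  qed
  then show ?thesis unfolding M_def L_def W_def R_def .
qed

lemma euler_fps_nth_diff_le:
  fixes as bs :: "'a::real_normed_field list"
  assumes "length as = d" "length bs = d" "\<forall>a\<in>set as. norm a \<le> 1" "\<forall>b\<in>set bs. norm b \<le> 1"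
  shows "norm (euler_fps as $ j - euler_fps bs $ j)
    \<le> (2 * real d * ((real d + 1) * (2 ^ d) ^ d) ^ d + 1) * ((2 * real d + 1) * 2 ^ d) ^ j
       * (\<Sum>i=1..d. norm (euler_fps as $ i - euler_fps bs $ i))"
proof (rule inverse_nth_diff_le[where C = "euler_denom as" and C' = "euler_denom bs"])
  show "norm (euler_denom as $ k) \<le> 2 ^ d" "norm (euler_denom bs $ k) \<le> 2 ^ d"
    "norm (euler_fps as $ k) \<le> (2 ^ d) ^ k" "norm (euler_fps bs $ k) \<le> (2 ^ d) ^ k" for k
    using norm_euler_denom_nth_le[OF assms(3)] norm_euler_denom_nth_le[OF assms(4)]
      norm_euler_fps_nth_le_power[OF assms(3)] norm_euler_fps_nth_le_power[OF assms(4)] assms(1,2)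
    by auto
  show "euler_denom bs $ k = 0" "euler_denom as $ k = 0" if "d < k" for k
    using that assms(1,2) by (simp_all add: euler_denom_nth_eq_0)
qed (simp_all add: euler_denom_mult_euler_fps euler_denom_nth_0)

lemma sum_le_enn2real_infsum:
  fixes f :: "'a \<Rightarrow> real"
  assumes "\<And>x. x \<in> A \<Longrightarrow> f x \<ge> 0" "infsum (\<lambda>x. ennreal (f x)) A < \<infinity>" "finite F" "F \<subseteq> A"
  shows "sum f F \<le> enn2real (infsum (\<lambda>x. ennreal (f x)) A)"
proof -
  have "ennreal (sum f F) = (\<Sum>x\<in>F. ennreal (f x))"
    by (rule sum_ennreal[symmetric]) (use assms(1,4) in auto)
  also have "\<dots> = infsum (\<lambda>x. ennreal (f x)) F" using assms(3) by simp
  also have "\<dots> \<le> infsum (\<lambda>x. ennreal (f x)) A"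
    using assms(4) by (intro infsum_mono_neutral nonneg_summable_on_complete) auto
  finally have "enn2real (ennreal (sum f F)) \<le> enn2real (infsum (\<lambda>x. ennreal (f x)) A)"
    using assms(2) by (intro enn2real_mono) auto
  then show ?thesis using assms(1,4) by (simp add: sum_nonneg subset_eq)
qed

lemma infsum_ennreal_less_top:
  fixes f :: "'a \<Rightarrow> real"
  assumes "\<And>x. x \<in> A \<Longrightarrow> f x \<ge> 0" "\<And>F. finite F \<Longrightarrow> F \<subseteq> A \<Longrightarrow> sum f F \<le> B"
  shows "infsum (\<lambda>x. ennreal (f x)) A < \<infinity>"
proof -
  have "infsum (\<lambda>x. ennreal (f x)) A = (SUP F\<in>{F. finite F \<and> F \<subseteq> A}. \<Sum>x\<in>F. ennreal (f x))"
    by (rule nonneg_infsum_complete) simp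
  also have "\<dots> \<le> ennreal B"
  proof (rule SUP_least)
    fix F assume F: "F \<in> {F. finite F \<and> F \<subseteq> A}"
    then have "(\<Sum>x\<in>F. ennreal (f x)) = ennreal (sum f F)"
      using assms(1) by (intro sum_ennreal) auto
    then show "(\<Sum>x\<in>F. ennreal (f x)) \<le> ennreal B" using F assms(2) by (simp add: ennreal_leI)
  qed
  finally show ?thesis using order.strict_trans1 by fastforce
qed

lemma sum_div_power_le_suminf:
  fixes e u :: "nat \<Rightarrow> real"
  assumes "Y > 0" "1 / Y \<le> x" and "\<And>j. 0 \<le> e j" "\<And>j. e j \<le> u j"
    and "summable (\<lambda>j. u j * x ^ j)" "finite J"
  shows "(\<Sum>j\<in>J. e j / Y ^ j) \<le> (\<Sum>j. u j * x ^ j)"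
proof -
  have u: "0 \<le> u j" for j using assms(3,4) order.trans by blast
  have x: "0 \<le> x" using assms(1,2) by (meson less_le_trans zero_less_divide_1_iff less_imp_le)
  have "(\<Sum>j\<in>J. e j / Y ^ j) \<le> (\<Sum>j\<in>J. u j * x ^ j)"
  proof (rule sum_mono)
    fix j
    have "e j / Y ^ j = e j * (1 / Y) ^ j" by (simp add: power_one_over)
    also have "\<dots> \<le> u j * x ^ j" using assms u by (intro mult_mono power_mono) auto
    finally show "e j / Y ^ j \<le> u j * x ^ j" .
  qed
  also have "\<dots> \<le> (\<Sum>j. u j * x ^ j)"
    using assms(5,6) u x by (intro sum_le_suminf) auto
  finally show ?thesis .
qed

lemma sum_div_power_le_initial_block:
  fixes e :: "nat \<Rightarrow> real"
  assumes Y: "Y \<ge> 1" "2 * R \<le> Y" and "R \<ge> 0" "W \<ge> 0"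
    and e: "\<And>j. 0 \<le> e j" "\<And>j. e j \<le> W * R ^ j * (\<Sum>k=1..d. e k)"
    and J: "finite J" "J \<subseteq> {1..}"
  shows "(\<Sum>j\<in>J. e j / Y ^ j) \<le> (1 + 2 * 2 ^ d * W * R ^ d) * (\<Sum>k=1..d. e k / Y ^ k)"
proof -
  define S where "S = (\<Sum>k=1..d. e k / Y ^ k)"
  have S: "S \<ge> 0" unfolding S_def using e Y by (simp add: sum_nonneg)
  have head: "(\<Sum>j\<in>J \<inter> {..d}. e j / Y ^ j) \<le> S"
    unfolding S_def using J e Y by (intro sum_mono2) auto
  have "(\<Sum>k=1..d. e k) \<le> Y ^ d * S"
    unfolding S_def sum_distrib_left
  proof (rule sum_mono)
    fix k assume k: "k \<in> {1..d}"
    have "e k = Y ^ k * (e k / Y ^ k)" using Y by simp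
    also have "\<dots> \<le> Y ^ d * (e k / Y ^ k)"
      using k Y e by (intro mult_right_mono power_increasing) auto
    finally show "e k \<le> Y ^ d * (e k / Y ^ k)" .
  qed
  then have tail_term: "e j / Y ^ j \<le> W * R ^ d * S * 2 ^ d * (1 / 2) ^ j" if j: "d < j" for j
  proof -
    obtain i where i: "j = d + i" using le_Suc_ex[of d j] j by auto
    have "e j \<le> W * R ^ j * (Y ^ d * S)"
      using order.trans[OF e(2) mult_left_mono[OF \<open>(\<Sum>k=1..d. e k) \<le> Y ^ d * S\<close>]] assms(3,4)
      by simp
    then have "e j / Y ^ j \<le> W * R ^ j * (Y ^ d * S) / Y ^ j"
      using Y by (intro divide_right_mono) auto
    also have "\<dots> = W * R ^ d * S * (R / Y) ^ i"
      unfolding i using Y by (simp add: power_add power_divide field_simps)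
    also have "\<dots> \<le> W * R ^ d * S * (1 / 2) ^ i"
      using Y assms(3,4) S by (intro mult_left_mono power_mono) (auto simp: field_simps)
    also have "\<dots> = W * R ^ d * S * 2 ^ d * (1 / 2) ^ j"
      unfolding i by (simp add: power_add power_divide)
    finally show ?thesis .
  qed
  have "(\<Sum>j\<in>J - {..d}. e j / Y ^ j) \<le> (\<Sum>j\<in>J - {..d}. W * R ^ d * S * 2 ^ d * (1 / 2) ^ j)"
    using tail_term by (intro sum_mono) auto
  also have "\<dots> = W * R ^ d * S * 2 ^ d * (\<Sum>j\<in>J - {..d}. (1 / 2) ^ j)"
    by (simp add: sum_distrib_left)
  also have "\<dots> \<le> W * R ^ d * S * 2 ^ d * 2"
  proof (rule mult_left_mono)
    have "(\<Sum>j\<in>J - {..d}. (1 / 2 :: real) ^ j) \<le> (\<Sum>j. (1 / 2) ^ j)"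
      using J by (intro sum_le_suminf) (auto simp: summable_geometric)
    then show "(\<Sum>j\<in>J - {..d}. (1 / 2 :: real) ^ j) \<le> 2"
      using suminf_geometric[of "1 / 2 :: real"] by simp
  qed (use assms(3,4) S in simp)
  finally have tail: "(\<Sum>j\<in>J - {..d}. e j / Y ^ j) \<le> W * R ^ d * S * 2 ^ d * 2" .
  have "(\<Sum>j\<in>J. e j / Y ^ j) = (\<Sum>j\<in>J \<inter> {..d}. e j / Y ^ j) + (\<Sum>j\<in>J - {..d}. e j / Y ^ j)"
    using J(1) by (rule sum.Int_Diff)
  also have "\<dots> \<le> S + W * R ^ d * S * 2 ^ d * 2" using head tail by (rule add_mono)
  also have "\<dots> = (1 + 2 * 2 ^ d * W * R ^ d) * S" by (simp add: algebra_simps)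
  finally show ?thesis unfolding S_def .
qed

lemma prime_power_series_finite_if_initial_finite:
  fixes \<delta> :: "nat \<Rightarrow> nat \<Rightarrow> real" and u :: "nat \<Rightarrow> real" and \<beta> W R :: real and d :: nat
  assumes "\<beta> > 0" "W \<ge> 0" "R \<ge> 0"
    and nonneg: "\<And>p j. prime p \<Longrightarrow> 0 \<le> \<delta> p j"
    and uniform: "\<And>p j. prime p \<Longrightarrow> \<delta> p j \<le> u j" "summable (\<lambda>j. u j * (2 powr - \<beta>) ^ j)"
    and recurrent: "\<And>p j. prime p \<Longrightarrow> \<delta> p j \<le> W * R ^ j * (\<Sum>k=1..d. \<delta> p k)"
    and initial: "infsum (\<lambda>(p, j). ennreal (\<delta> p j / real p powr (real j * \<beta>)))
      {(p, j). prime p \<and> 1 \<le> j \<and> j \<le> d} < \<infinity>"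
  shows "infsum (\<lambda>(p, j). ennreal (\<delta> p j / real p powr (real j * \<beta>)))
      {(p, j). prime p \<and> 1 \<le> j} < \<infinity>"
proof -
  define t where "t = (\<lambda>(p, j). \<delta> p j / real p powr (real j * \<beta>))"
  define D where "D = enn2real (infsum (\<lambda>x. ennreal (t x)) {(p, j). prime p \<and> 1 \<le> j \<and> j \<le> d})"
  define S where "S = (\<Sum>j. u j * (2 powr - \<beta>) ^ j)"
  define K where "K = 1 + 2 * 2 ^ d * W * R ^ d"
  define N where "N = nat \<lceil>(2 * R) powr (1 / \<beta>)\<rceil>"
  have ennreal_t: "(\<lambda>(p, j). ennreal (\<delta> p j / real p powr (real j * \<beta>))) = (\<lambda>x. ennreal (t x))"
    by (auto simp: t_def)
  have t_nonneg: "t (p, j) \<ge> 0" if "prime p" for p j using nonneg[OF that] by (simp add: t_def)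
  have t_eq: "t (p, j) = \<delta> p j / (real p powr \<beta>) ^ j" if "prime p" for p j
    using prime_gt_0_nat[OF that] by (simp add: t_def powr_realpow[symmetric] powr_powr mult.commute)
  have u: "0 \<le> u j" for j
    using nonneg[of 2 j] uniform(1)[of 2 j] by simp
  have S: "S \<ge> 0" unfolding S_def using uniform(2) u by (intro suminf_nonneg) auto
  have K: "K \<ge> 0" unfolding K_def using assms(2,3) by simp
  have initial_sum: "sum t F \<le> D" if "finite F" "F \<subseteq> {(p, j). prime p \<and> 1 \<le> j \<and> j \<le> d}" for F
    unfolding D_def using initial t_nonneg that
    by (intro sum_le_enn2real_infsum) (auto simp: ennreal_t)
  have per_prime: "(\<Sum>j\<in>J. t (p, j)) \<le> (if p \<le> N then S else 0) + K * (\<Sum>k=1..d. t (p, k))"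
    if p: "prime p" and J: "finite J" "J \<subseteq> {1..}" for p J
  proof (cases "p \<le> N")
    case True
    have "2 powr \<beta> \<le> real p powr \<beta>"
      using prime_ge_2_nat[OF p] assms(1) by (intro powr_mono2) auto
    then have "1 / real p powr \<beta> \<le> 2 powr - \<beta>"
      by (simp add: powr_minus divide_simps)
    moreover have "real p powr \<beta> > 0" using prime_gt_0_nat[OF p] by simp
    ultimately have "(\<Sum>j\<in>J. t (p, j)) \<le> S"
      unfolding t_eq[OF p] S_def
      by (intro sum_div_power_le_suminf[OF _ _ nonneg[OF p] uniform(1)[OF p] uniform(2) J(1)])
    moreover have "0 \<le> K * (\<Sum>k=1..d. t (p, k))"
      using K t_nonneg[OF p] by (simp add: sum_nonneg)
    ultimately show ?thesis using True by simp
  next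
    case False
    have "(2 * R) powr (1 / \<beta>) \<le> real p"
      using False real_nat_ceiling_ge[of "(2 * R) powr (1 / \<beta>)"] unfolding N_def by linarith
    then have "((2 * R) powr (1 / \<beta>)) powr \<beta> \<le> real p powr \<beta>"
      using assms(1) by (intro powr_mono2) auto
    then have "2 * R \<le> real p powr \<beta>" using assms(1,3) by (simp add: powr_powr)
    moreover have "1 \<le> real p powr \<beta>"
      using prime_gt_0_nat[OF p] assms(1) by (simp add: ge_one_powr_ge_zero)
    ultimately have "(\<Sum>j\<in>J. t (p, j)) \<le> K * (\<Sum>k=1..d. t (p, k))"
      unfolding t_eq[OF p] K_def
      by (intro sum_div_power_le_initial_block[OF _ _ assms(3,2) nonneg[OF p] recurrent[OF p] J])
    then show ?thesis using False by simp
  qed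
  have "sum t F \<le> (real N + 1) * S + K * D" if F: "finite F" "F \<subseteq> {(p, j). prime p \<and> 1 \<le> j}" for F
  proof -
    define P where "P = fst ` F"
    define J where "J = snd ` F"
    have P: "finite P" "\<And>p. p \<in> P \<Longrightarrow> prime p" and J: "finite J" "J \<subseteq> {1..}"
      using F by (auto simp: P_def J_def)
    have "sum t F \<le> sum t (P \<times> J)"
      using P J t_nonneg unfolding P_def J_def by (intro sum_mono2 subset_fst_snd) auto
    also have "\<dots> = (\<Sum>p\<in>P. \<Sum>j\<in>J. t (p, j))" by (simp add: sum.cartesian_product)
    also have "\<dots> \<le> (\<Sum>p\<in>P. (if p \<le> N then S else 0) + K * (\<Sum>k=1..d. t (p, k)))"
      using P J by (intro sum_mono per_prime) auto
    also have "\<dots> = (\<Sum>p\<in>P. if p \<le> N then S else 0) + K * sum t (P \<times> {1..d})"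
      by (simp add: sum.distrib sum_distrib_left sum.cartesian_product)
    also have "\<dots> \<le> (real N + 1) * S + K * D"
    proof (intro add_mono mult_left_mono K)
      have "(\<Sum>p\<in>P. if p \<le> N then S else 0) = (\<Sum>p\<in>P \<inter> {..N}. S)"
        using P(1) by (simp only: sum.inter_restrict atMost_iff)
      also have "\<dots> \<le> (\<Sum>p\<in>{..N}. S)" using S by (intro sum_mono2) auto
      finally show "(\<Sum>p\<in>P. if p \<le> N then S else 0) \<le> (real N + 1) * S"
        by (simp add: add.commute)
      show "sum t (P \<times> {1..d}) \<le> D"
        using P by (intro initial_sum) auto
    qed
    finally show ?thesis .
  qed
  then show ?thesis
    unfolding ennreal_t using t_nonneg by (intro infsum_ennreal_less_top) auto
qed

theorem lemma8:
  fixes f g :: "nat \<Rightarrow> complex" and d :: nat and \<beta> :: real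
  assumes "S_class d f" and "S_class d g" and "\<beta> > 0"
    and "Dhat \<beta> (enat d) f g < \<infinity>"
  shows "Dhat \<beta> \<infinity> f g < \<infinity>"
proof -
  define W :: real where "W = 2 * real d * ((real d + 1) * (2 ^ d) ^ d) ^ d + 1"
  define R :: real where "R = (2 * real d + 1) * 2 ^ d"
  define \<delta> where "\<delta> p j = norm (f (p ^ j) - g (p ^ j))" for p j
  have local_bounds: "\<delta> p j \<le> 2 * num_weak_compositions d j \<and> \<delta> p j \<le> W * R ^ j * (\<Sum>k=1..d. \<delta> p k)"
    if p: "prime p" for p j
  proof
    obtain as where as: "length as = d" "\<forall>a\<in>set as. norm a \<le> 1" "\<And>j. f (p ^ j) = euler_fps as $ j"
      using S_class_prime_power[OF assms(1) p] by blast
    obtain bs where bs: "length bs = d" "\<forall>b\<in>set bs. norm b \<le> 1" "\<And>j. g (p ^ j) = euler_fps bs $ j"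
      using S_class_prime_power[OF assms(2) p] by blast
    have "\<delta> p j \<le> norm (euler_fps as $ j) + norm (euler_fps bs $ j)"
      unfolding \<delta>_def as(3) bs(3) by (rule norm_triangle_ineq4)
    then show "\<delta> p j \<le> 2 * num_weak_compositions d j"
      using norm_euler_fps_nth_le[OF as(2), of j] norm_euler_fps_nth_le[OF bs(2), of j] as(1) bs(1)
      by simp
    show "\<delta> p j \<le> W * R ^ j * (\<Sum>k=1..d. \<delta> p k)"
      using euler_fps_nth_diff_le[OF as(1) bs(1) as(2) bs(2), of j]
      unfolding \<delta>_def as(3) bs(3) W_def R_def .
  qed
  have summable: "summable (\<lambda>j. 2 * num_weak_compositions d j * (2 powr - \<beta>) ^ j)"
    using summable_num_weak_compositions[of "2 powr - \<beta>" d] assms(3)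
    by (simp add: powr_less_one summable_mult mult.assoc)
  have initial: "infsum (\<lambda>(p, j). ennreal (\<delta> p j / real p powr (real j * \<beta>)))
      {(p, j). prime p \<and> 1 \<le> j \<and> j \<le> d} < \<infinity>"
    using assms(4) by (simp add: Dhat_def \<delta>_def)
  have "infsum (\<lambda>(p, j). ennreal (\<delta> p j / real p powr (real j * \<beta>))) {(p, j). prime p \<and> 1 \<le> j} < \<infinity>"
  proof (rule prime_power_series_finite_if_initial_finite[OF assms(3) _ _ _ _ summable _ initial])
    show "0 \<le> W" "0 \<le> R" "0 \<le> \<delta> p j" for p j by (simp_all add: W_def R_def \<delta>_def)
  qed (use local_bounds in blast)+
  then show ?thesis by (simp add: Dhat_def \<delta>_def)
qed

end
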